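(* Status injective trees are status unique in trees: if $T$ is a tree whose vertices have pairwise distinct status values, and $T'$ is any tree with $\sigma(T')=\sigma(T)$, then $T'$ is isomorphic to $T$.
   Context: All graphs are finite, simple and connected. For a connected graph $G=(V,E)$ and $v\in V$, the status of $v$ is $s(v)=\sum_{u\in V} d(v,u)$, where $d$ is the shortest-path distance. The status sequence $\sigma(G)$ is the list of the statuses of all vertices of $G$ arranged in nondecreasing order. A connected graph is status injective if the statuses of its vertices are pairwise distinct. *)

theory Defs
  imports Main "HOL-Library.Multiset"
begin

definition simple_graph :: "'a set \<Rightarrow> 'a set set \<Rightarrow> bool" where
  "simple_graph V E \<longleftrightarrow> finite V \<and> (\<forall>e\<in>E. \<exists>u v. u \<in> V \<and> v \<in> V \<and> u \<noteq> v \<and> e = {u, v})"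

text \<open>A walk is a nonempty list of vertices with consecutive entries adjacent;
its length is the number of edges, i.e. length minus one.\<close>

definition walk :: "'a set \<Rightarrow> 'a set set \<Rightarrow> 'a list \<Rightarrow> bool" where
  "walk V E xs \<longleftrightarrow> xs \<noteq> [] \<and> set xs \<subseteq> V \<and>
     (\<forall>i. Suc i < length xs \<longrightarrow> {xs ! i, xs ! Suc i} \<in> E)"

definition connected_graph :: "'a set \<Rightarrow> 'a set set \<Rightarrow> bool" where
  "connected_graph V E \<longleftrightarrow> simple_graph V E \<and> V \<noteq> {} \<and>
     (\<forall>u\<in>V. \<forall>v\<in>V. \<exists>xs. walk V E xs \<and> hd xs = u \<and> last xs = v)"

definition is_cycle :: "'a set \<Rightarrow> 'a set set \<Rightarrow> 'a list \<Rightarrow> bool" where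
  "is_cycle V E xs \<longleftrightarrow> walk V E xs \<and> distinct xs \<and> length xs \<ge> 3 \<and> {last xs, hd xs} \<in> E"

definition is_tree :: "'a set \<Rightarrow> 'a set set \<Rightarrow> bool" where
  "is_tree V E \<longleftrightarrow> connected_graph V E \<and> \<not> (\<exists>xs. is_cycle V E xs)"

definition gdist :: "'a set \<Rightarrow> 'a set set \<Rightarrow> 'a \<Rightarrow> 'a \<Rightarrow> nat" where
  "gdist V E u v = (LEAST n. \<exists>xs. walk V E xs \<and> hd xs = u \<and> last xs = v \<and> length xs = Suc n)"

definition status :: "'a set \<Rightarrow> 'a set set \<Rightarrow> 'a \<Rightarrow> nat" where
  "status V E v = (\<Sum>u\<in>V. gdist V E v u)"

definition status_seq :: "'a set \<Rightarrow> 'a set set \<Rightarrow> nat list" where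
  "status_seq V E = sorted_list_of_multiset (image_mset (status V E) (mset_set V))"

definition status_injective :: "'a set \<Rightarrow> 'a set set \<Rightarrow> bool" where
  "status_injective V E \<longleftrightarrow> connected_graph V E \<and> inj_on (status V E) V"

definition graph_isomorphic :: "'a set \<Rightarrow> 'a set set \<Rightarrow> 'b set \<Rightarrow> 'b set set \<Rightarrow> bool" where
  "graph_isomorphic V E V' E' \<longleftrightarrow>
     (\<exists>f. bij_betw f V V' \<and> (\<forall>u\<in>V. \<forall>v\<in>V. {u, v} \<in> E \<longleftrightarrow> {f u, f v} \<in> E'))"

end

theory Submission
  imports Defs
begin

text \<open>In a tree on \<open>n\<close> vertices, every edge \<open>uv\<close> satisfies
  \<open>s(v) + n = s(u) + 2 |branch u v|\<close>, where \<open>branch u v\<close> is the set of vertices closer to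
  \<open>u\<close> than to \<open>v\<close>. Hence a vertex has at most one neighbor of smaller status, and a vertex
  with none has minimum status. If the statuses are distinct, root the tree at the vertex of
  minimum status: the parent of any other vertex \<open>u\<close> is its neighbor of smaller status,
  \<open>branch u (parent u)\<close> is the subtree at \<open>u\<close>, and
  \<open>s(parent u) = s(u) + 2 |branch u (parent u)| - n\<close>. Subtree sizes add up over children,
  so downward induction on the status shows that the subtree size of a vertex and the status
  of its parent are determined by the status values alone. A tree with the same status
  sequence has the same number of vertices and the same (distinct) status values, so matching
  vertices of equal status maps parents to parents and is an isomorphism.\<close>

lemma walk_Nil [simp]: "\<not> walk V E []"
  by (simp add: walk_def)

lemma walk_singleton [simp]: "walk V E [x] \<longleftrightarrow> x \<in> V"
  by (simp add: walk_def)

lemma walk_Cons_Cons [simp]: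
  "walk V E (x # y # xs) \<longleftrightarrow> x \<in> V \<and> {x, y} \<in> E \<and> walk V E (y # xs)"
  by (auto simp: walk_def nth_Cons split: nat.splits)

lemma walk_Cons: "walk V E xs \<Longrightarrow> x \<in> V \<Longrightarrow> {x, hd xs} \<in> E \<Longrightarrow> walk V E (x # xs)"
  by (cases xs) auto

lemma walk_snoc: "walk V E xs \<Longrightarrow> y \<in> V \<Longrightarrow> {last xs, y} \<in> E \<Longrightarrow> walk V E (xs @ [y])"
  by (induction xs rule: induct_list012) auto

locale connected_simple_graph =
  fixes V :: "'a set" and E :: "'a set set"
  assumes connected: "connected_graph V E"
begin

abbreviation d where "d \<equiv> gdist V E"
abbreviation s where "s \<equiv> status V E"
abbreviation n where "n \<equiv> card V"

lemma finite_V: "finite V"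
  using connected by (simp add: connected_graph_def simple_graph_def)

lemma edge_vertices:
  assumes "{u, v} \<in> E"
  shows "u \<in> V" "v \<in> V" "u \<noteq> v"
proof -
  obtain a b where "a \<in> V" "b \<in> V" "a \<noteq> b" "{u, v} = {a, b}"
    using assms connected unfolding connected_graph_def simple_graph_def by blast
  then show "u \<in> V" "v \<in> V" "u \<noteq> v"
    by (auto simp: doubleton_eq_iff)
qed

lemma shortest_walk:
  assumes "u \<in> V" "v \<in> V"
  obtains xs where "walk V E xs" "hd xs = u" "last xs = v" "length xs = Suc (d u v)"
proof -
  obtain xs where xs: "walk V E xs" "hd xs = u" "last xs = v"
    using connected assms by (auto simp: connected_graph_def)
  then have "length xs = Suc (length xs - 1)"
    by (cases xs) auto
  then have "\<exists>k xs. walk V E xs \<and> hd xs = u \<and> last xs = v \<and> length xs = Suc k"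
    using xs by blast
  from LeastI_ex[OF this] show ?thesis
    using that unfolding gdist_def by blast
qed

lemma gdist_less_length:
  assumes "walk V E xs" "hd xs = u" "last xs = v"
  shows "d u v < length xs"
proof -
  have "length xs = Suc (length xs - 1)"
    using assms(1) by (cases xs) auto
  then have "d u v \<le> length xs - 1"
    unfolding gdist_def using assms by (metis (mono_tags, lifting) Least_le)
  then show ?thesis
    using \<open>length xs = Suc (length xs - 1)\<close> by linarith
qed

lemma gdist_self [simp]: "w \<in> V \<Longrightarrow> d w w = 0"
  using gdist_less_length[of "[w]" w w] by simp

lemma gdist_eq_0D:
  assumes "u \<in> V" "w \<in> V" "d u w = 0"
  shows "u = w"
proof -
  obtain xs where "walk V E xs" "hd xs = u" "last xs = w" "length xs = 1"
    using shortest_walk[OF assms(1,2)] assms(3) by auto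
  then show ?thesis
    by (cases xs) auto
qed

lemma gdist_edge_le:
  assumes "{u, v} \<in> E" "w \<in> V"
  shows "d u w \<le> Suc (d v w)"
proof -
  obtain xs where xs: "walk V E xs" "hd xs = v" "last xs = w" "length xs = Suc (d v w)"
    using shortest_walk[OF edge_vertices(2)[OF assms(1)] assms(2)] .
  then have "walk V E (u # xs)" "xs \<noteq> []"
    using walk_Cons[OF xs(1) edge_vertices(1)[OF assms(1)]] assms(1) by auto
  then have "d u w < length (u # xs)"
    using gdist_less_length xs(3) by fastforce
  then show ?thesis
    using xs(4) by simp
qed

lemma gdist_SucE:
  assumes "u \<in> V" "w \<in> V" "d u w = Suc k"
  obtains c where "{u, c} \<in> E" "c \<in> V" "d c w = k"
proof -
  obtain xs where xs: "walk V E xs" "hd xs = u" "last xs = w" "length xs = Suc (Suc k)"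
    using shortest_walk[OF assms(1,2)] assms(3) by metis
  then obtain c ys where xs_eq: "xs = u # c # ys"
    by (auto simp: length_Suc_conv)
  then have "{u, c} \<in> E" "walk V E (c # ys)"
    using xs(1) by auto
  moreover have "d c w < Suc k"
    using gdist_less_length[OF \<open>walk V E (c # ys)\<close>] xs xs_eq by auto
  moreover have "Suc k \<le> Suc (d c w)"
    using gdist_edge_le[OF \<open>{u, c} \<in> E\<close> assms(2)] assms(3) by simp
  ultimately show ?thesis
    using that edge_vertices(2) by force
qed

end

locale tree_graph = connected_simple_graph +
  assumes acyclic: "\<not> (\<exists>xs. is_cycle V E xs)"
begin

lemma no_cycle:
  "walk V E xs \<Longrightarrow> distinct xs \<Longrightarrow> 3 \<le> length xs \<Longrightarrow> {last xs, hd xs} \<in> E \<Longrightarrow> False"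
  using acyclic unfolding is_cycle_def by blast

text \<open>Joining \<open>a\<close> and \<open>b\<close> recursively through their predecessors gives a path inside the
  ball of radius \<open>j\<close> about \<open>w\<close>; an edge \<open>ab\<close>, or a common neighbor of \<open>a\<close> and \<open>b\<close> one level
  further out, would close it into a cycle.\<close>

lemma level_path:
  assumes "w \<in> V" "a \<in> V" "b \<in> V" "a \<noteq> b" "d a w = j" "d b w = j"
  shows "\<exists>P. walk V E P \<and> distinct P \<and> hd P = a \<and> last P = b \<and> 3 \<le> length P \<and>
    (\<forall>x\<in>set P. d x w \<le> j)"
  using assms(2-)
proof (induction j arbitrary: a b)
  case 0
  then show ?case
    using gdist_eq_0D assms(1) by metis
next
  case (Suc j)
  obtain a' where a': "{a, a'} \<in> E" "a' \<in> V" "d a' w = j"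
    using gdist_SucE Suc.prems assms(1) by metis
  obtain b' where b': "{b, b'} \<in> E" "b' \<in> V" "d b' w = j"
    using gdist_SucE Suc.prems assms(1) by metis
  show ?case
  proof (cases "a' = b'")
    case True
    then have "walk V E [a, a', b]" "distinct [a, a', b]"
      using a' b' Suc.prems by (auto simp: insert_commute)
    then show ?thesis
      using a' Suc.prems by (intro exI[of _ "[a, a', b]"]) auto
  next
    case False
    then obtain Q where Q: "walk V E Q" "distinct Q" "hd Q = a'" "last Q = b'" "3 \<le> length Q"
        "\<forall>x\<in>set Q. d x w \<le> j"
      using Suc.IH a' b' by blast
    have "walk V E (Q @ [b])"
      using walk_snoc[OF Q(1)] Suc.prems b' Q(4) by (simp add: insert_commute)
    moreover have "hd (Q @ [b]) = a'"
      using Q(3,5) by (cases Q) auto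
    ultimately have "walk V E (a # Q @ [b])"
      using walk_Cons[OF \<open>walk V E (Q @ [b])\<close>] Suc.prems a' by auto
    moreover have "distinct (a # Q @ [b])" "\<forall>x\<in>set (a # Q @ [b]). d x w \<le> Suc j"
      using Q Suc.prems by fastforce+
    ultimately show ?thesis
      using Q by (intro exI[of _ "a # Q @ [b]"]) auto
  qed
qed

lemma gdist_edge_neq:
  assumes "{u, v} \<in> E" "w \<in> V"
  shows "d u w \<noteq> d v w"
proof
  assume "d u w = d v w"
  then obtain P where "walk V E P" "distinct P" "hd P = u" "last P = v" "3 \<le> length P"
    using level_path[OF assms(2)] edge_vertices[OF assms(1)] by blast
  then show False
    using no_cycle assms(1) by (metis insert_commute)
qed

lemma closer_neighbor_unique:
  assumes "{y, x} \<in> E" "{y, z} \<in> E" "w \<in> V" "d x w < d y w" "d z w < d y w"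
  shows "x = z"
proof (rule ccontr)
  assume "x \<noteq> z"
  have "d y w \<le> Suc (d x w)" "d y w \<le> Suc (d z w)"
    using gdist_edge_le assms by (auto simp: insert_commute)
  then have levels: "d x w = d z w" "d y w = Suc (d x w)"
    using assms by auto
  obtain P where P: "walk V E P" "distinct P" "hd P = x" "last P = z" "3 \<le> length P"
      "\<forall>a\<in>set P. d a w \<le> d x w"
    using level_path[OF assms(3)] edge_vertices assms(1,2) levels \<open>x \<noteq> z\<close> by metis
  then have "y \<notin> set P"
    using levels by fastforce
  then have "walk V E (y # P)" "distinct (y # P)" "{last (y # P), hd (y # P)} \<in> E"
    using P walk_Cons[OF P(1) edge_vertices(1)[OF assms(1)]] assms(1,2)
    by (auto simp: insert_commute)
  then show False
    using no_cycle P(5) by fastforce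
qed

lemma gdist_edge:
  assumes "{u, v} \<in> E" "w \<in> V"
  shows "d v w = Suc (d u w) \<or> d u w = Suc (d v w)"
proof -
  have "{v, u} \<in> E"
    using assms(1) by (simp add: insert_commute)
  then show ?thesis
    using gdist_edge_le[OF assms] gdist_edge_le[of v u w] gdist_edge_neq[OF assms] assms(2)
    by fastforce
qed

definition branch :: "'a \<Rightarrow> 'a \<Rightarrow> 'a set" where
  "branch u v = {w \<in> V. d u w < d v w}"

definition neighbors :: "'a \<Rightarrow> 'a set" where
  "neighbors u = {c \<in> V. {u, c} \<in> E}"

lemma finite_branch: "finite (branch u v)"
  using finite_V by (simp add: branch_def)

lemma card_branch_add:
  assumes "{u, v} \<in> E"
  shows "card (branch u v) + card (branch v u) = n"
proof -
  have "branch u v \<union> branch v u = V" "branch u v \<inter> branch v u = {}"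
    using gdist_edge_neq[OF assms] by (auto simp: branch_def nat_neq_iff)
  then show ?thesis
    using card_Un_disjoint[OF finite_branch finite_branch] by metis
qed

lemma status_edge:
  assumes "{u, v} \<in> E"
  shows "s v + n = s u + 2 * card (branch u v)"
proof -
  have card_branch: "card (branch x y) = (\<Sum>w\<in>V. of_bool (d x w < d y w))" for x y
    using finite_V by (simp add: branch_def sum.If_cases Int_def)
  have "(\<Sum>w\<in>V. d u w + of_bool (d u w < d v w)) = (\<Sum>w\<in>V. d v w + of_bool (d v w < d u w))"
  proof (rule sum.cong)
    fix w
    assume "w \<in> V"
    then show "d u w + of_bool (d u w < d v w) = d v w + of_bool (d v w < d u w)"
      using gdist_edge[OF assms, of w] by auto
  qed simp
  then have "s u + card (branch u v) = s v + card (branch v u)"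
    unfolding status_def card_branch sum.distrib .
  then show ?thesis
    using card_branch_add[OF assms] by linarith
qed

lemma branch_mono:
  assumes "{x, y} \<in> E" "{y, z} \<in> E" "x \<noteq> z"
  shows "branch x y \<subseteq> branch y z"
proof
  fix w
  assume "w \<in> branch x y"
  then have w: "w \<in> V" "d x w < d y w"
    by (auto simp: branch_def)
  have "\<not> d z w < d y w"
    using closer_neighbor_unique[of y x z w] assms w by (auto simp: insert_commute)
  then show "w \<in> branch y z"
    using gdist_edge_neq[OF assms(2) w(1)] w by (auto simp: branch_def)
qed

lemma branch_decomp:
  assumes "{u, v} \<in> E"
  shows "branch u v = insert u (\<Union>c \<in> neighbors u - {v}. branch c u)"
proof (intro equalityI subsetI)
  fix w
  assume w: "w \<in> branch u v"
  show "w \<in> insert u (\<Union>c \<in> neighbors u - {v}. branch c u)"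
  proof (cases "w = u")
    case False
    then obtain k where k: "d u w = Suc k"
      using w gdist_eq_0D edge_vertices(1)[OF assms] not0_implies_Suc
      by (metis (no_types, lifting) branch_def mem_Collect_eq)
    then obtain c where c: "{u, c} \<in> E" "c \<in> V" "d c w = k"
      using gdist_SucE edge_vertices(1)[OF assms] w by (metis branch_def mem_Collect_eq)
    then have "c \<in> neighbors u - {v}" "w \<in> branch c u"
      using k w by (auto simp: neighbors_def branch_def)
    then show ?thesis
      by blast
  qed simp
next
  fix w
  assume "w \<in> insert u (\<Union>c \<in> neighbors u - {v}. branch c u)"
  then consider "w = u" | c where "c \<in> neighbors u - {v}" "w \<in> branch c u"
    by blast
  then show "w \<in> branch u v"
  proof cases
    case 1
    then show ?thesis
      using edge_vertices[OF assms] gdist_eq_0D[of v u] by (auto simp: branch_def)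
  next
    case 2
    then have "{c, u} \<in> E"
      by (simp add: neighbors_def insert_commute)
    then show ?thesis
      using branch_mono[of c u v] assms 2 by blast
  qed
qed

lemma card_branch_decomp:
  assumes "{u, v} \<in> E"
  shows "card (branch u v) = Suc (\<Sum>c \<in> neighbors u - {v}. card (branch c u))"
proof -
  have finite_nbrs: "finite (neighbors u - {v})"
    using finite_V by (simp add: neighbors_def)
  have disjoint: "branch c u \<inter> branch c' u = {}"
    if "c \<in> neighbors u - {v}" "c' \<in> neighbors u - {v}" "c \<noteq> c'" for c c'
    using that closer_neighbor_unique[of u c c'] by (auto simp: neighbors_def branch_def)
  have "u \<notin> (\<Union>c \<in> neighbors u - {v}. branch c u)"
    using edge_vertices(1)[OF assms] by (auto simp: branch_def)
  then have "card (branch u v) = Suc (card (\<Union>c \<in> neighbors u - {v}. branch c u))"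
    using branch_decomp[OF assms] finite_branch[of u v] by (metis card_insert_disjoint finite_insert)
  also have "card (\<Union>c \<in> neighbors u - {v}. branch c u) = (\<Sum>c \<in> neighbors u - {v}. card (branch c u))"
    using finite_branch disjoint by (intro card_UN_disjoint[OF finite_nbrs]) auto
  finally show ?thesis .
qed

definition downhill :: "'a \<Rightarrow> 'a \<Rightarrow> bool" where
  "downhill u c \<longleftrightarrow> c \<in> V \<and> {u, c} \<in> E \<and> s c < s u"

lemma downhill_card_branch:
  assumes "downhill u c"
  shows "n < 2 * card (branch c u)"
proof -
  have "{c, u} \<in> E"
    using assms by (simp add: downhill_def insert_commute)
  then show ?thesis
    using status_edge[of c u] assms by (simp add: downhill_def)
qed

lemma downhill_unique:
  assumes "downhill u c" "downhill u c'"
  shows "c = c'"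
proof (rule ccontr)
  assume "c \<noteq> c'"
  then have "branch c u \<inter> branch c' u = {}"
    using closer_neighbor_unique[of u c c'] assms by (auto simp: downhill_def branch_def)
  then have "card (branch c u) + card (branch c' u) = card (branch c u \<union> branch c' u)"
    using card_Un_disjoint[OF finite_branch finite_branch] by simp
  also have "\<dots> \<le> n"
    using finite_V by (intro card_mono) (auto simp: branch_def)
  finally show False
    using downhill_card_branch[OF assms(1)] downhill_card_branch[OF assms(2)] by linarith
qed

text \<open>Walking away from \<open>u\<close>, the branch ahead of each edge contains the branch
  ahead of the previous one, so once an edge does not decrease the status, none of the
  following edges does.\<close>

lemma local_min_status_le:
  assumes "u \<in> V" "\<not> (\<exists>c. downhill u c)" "w \<in> V"
  shows "s u \<le> s w"
proof -
  have "n \<le> 2 * card (branch y z) \<and> s u \<le> s z"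
    if "{y, z} \<in> E" "d y u = k" "d z u = Suc k" for y z k
    using that
  proof (induction k arbitrary: y z)
    case 0
    then have "y = u"
      using gdist_eq_0D edge_vertices assms(1) by metis
    then have "s u \<le> s z"
      using 0 assms(2) edge_vertices by (force simp: downhill_def)
    then show ?case
      using status_edge[OF "0.prems"(1)] by (simp add: \<open>y = u\<close>)
  next
    case (Suc k)
    obtain x where x: "{y, x} \<in> E" "x \<in> V" "d x u = k"
      using gdist_SucE[OF _ assms(1)] edge_vertices Suc.prems by metis
    then have "n \<le> 2 * card (branch x y)" "s u \<le> s y"
      using Suc.IH[of x y] Suc.prems by (auto simp: insert_commute)
    moreover have "x \<noteq> z"
      using x Suc.prems by auto
    then have "branch x y \<subseteq> branch y z"
      using branch_mono[of x y z] x Suc.prems by (simp add: insert_commute)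
    then have "card (branch x y) \<le> card (branch y z)"
      by (intro card_mono finite_branch)
    ultimately show ?case
      using status_edge[OF Suc.prems(1)] by linarith
  qed
  then show ?thesis
    using gdist_eq_0D[OF assms(3,1)] gdist_SucE[OF assms(3,1)] not0_implies_Suc
    by (metis insert_commute order_refl)
qed

end

locale status_injective_tree = tree_graph +
  assumes status_inj: "inj_on s V"
begin

definition root :: 'a where
  "root = arg_min_on s V"

lemma root_in_V: "root \<in> V"
  and status_root_le: "v \<in> V \<Longrightarrow> s root \<le> s v"
proof -
  have "V \<noteq> {}"
    using connected by (simp add: connected_graph_def)
  then show "root \<in> V" "v \<in> V \<Longrightarrow> s root \<le> s v"
    unfolding root_def using finite_V by (simp_all add: arg_min_if_finite(1) arg_min_least)
qed

lemma not_downhill_root: "\<not> downhill root c"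
  unfolding downhill_def using status_root_le leD by blast

lemma downhill_exists:
  assumes "u \<in> V" "u \<noteq> root"
  shows "\<exists>c. downhill u c"
proof (rule ccontr)
  assume "\<not> (\<exists>c. downhill u c)"
  then have "s u = s root"
    using local_min_status_le[OF assms(1) _ root_in_V] status_root_le[OF assms(1)] by simp
  then show False
    using status_inj assms root_in_V by (auto dest: inj_onD)
qed

definition parent :: "'a \<Rightarrow> 'a" where
  "parent u = (THE c. downhill u c)"

lemma parent_eq: "downhill u c \<Longrightarrow> parent u = c"
  unfolding parent_def using downhill_unique by blast

lemma downhill_parent: "u \<in> V \<Longrightarrow> u \<noteq> root \<Longrightarrow> downhill u (parent u)"
  using downhill_exists parent_eq by blast

lemma
  assumes "u \<in> V" "u \<noteq> root"
  shows parent_in_V: "parent u \<in> V"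
    and edge_parent: "{u, parent u} \<in> E"
    and status_parent_less: "s (parent u) < s u"
  using downhill_parent[OF assms] by (auto simp: downhill_def)

lemma edge_iff_parent:
  assumes "a \<in> V" "b \<in> V"
  shows "{a, b} \<in> E \<longleftrightarrow> (a \<noteq> root \<and> parent a = b) \<or> (b \<noteq> root \<and> parent b = a)"
proof
  assume edge: "{a, b} \<in> E"
  then have "s a \<noteq> s b"
    using edge_vertices status_inj assms by (metis inj_onD)
  then have "downhill a b \<or> downhill b a"
    using edge assms by (auto simp: downhill_def insert_commute)
  then show "(a \<noteq> root \<and> parent a = b) \<or> (b \<noteq> root \<and> parent b = a)"
    using not_downhill_root parent_eq by blast
next
  assume "(a \<noteq> root \<and> parent a = b) \<or> (b \<noteq> root \<and> parent b = a)"
  then show "{a, b} \<in> E"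
    using edge_parent assms by (auto simp: insert_commute)
qed

definition children :: "'a \<Rightarrow> 'a set" where
  "children u = {c \<in> V. c \<noteq> root \<and> parent c = u}"

definition subtree_size :: "'a \<Rightarrow> nat" where
  "subtree_size u = card (branch u (parent u))"

lemma neighbors_minus_parent:
  assumes "u \<in> V" "u \<noteq> root"
  shows "neighbors u - {parent u} = children u"
proof (intro equalityI subsetI)
  fix c
  assume "c \<in> neighbors u - {parent u}"
  then have c: "c \<in> V" "{u, c} \<in> E" "c \<noteq> parent u"
    by (auto simp: neighbors_def)
  have "s c \<noteq> s u"
    using inj_onD[OF status_inj _ c(1) assms(1)] edge_vertices(3)[OF c(2)] by auto
  moreover have "\<not> s c < s u"
    using parent_eq c by (auto simp: downhill_def)
  ultimately have "downhill c u"
    using assms(1) c(2) by (auto simp: downhill_def insert_commute)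
  then show "c \<in> children u"
    using not_downhill_root parent_eq c(1) by (auto simp: children_def)
next
  fix c
  assume "c \<in> children u"
  then have c: "c \<in> V" "c \<noteq> root" "parent c = u"
    by (simp_all add: children_def)
  have "{u, c} \<in> E"
    using edge_parent[OF c(1,2)] c(3) by (simp add: insert_commute)
  moreover have "c \<noteq> parent u"
    using status_parent_less[OF c(1,2)] status_parent_less[OF assms] c(3) by auto
  ultimately show "c \<in> neighbors u - {parent u}"
    using c(1) by (simp add: neighbors_def)
qed

lemma subtree_size_rec:
  assumes "u \<in> V" "u \<noteq> root"
  shows "subtree_size u = Suc (\<Sum>c \<in> children u. subtree_size c)"
proof -
  have "subtree_size u = Suc (\<Sum>c \<in> children u. card (branch c u))"
    using card_branch_decomp[OF edge_parent[OF assms]] neighbors_minus_parent[OF assms]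
    by (simp add: subtree_size_def)
  also have "(\<Sum>c \<in> children u. card (branch c u)) = (\<Sum>c \<in> children u. subtree_size c)"
    by (intro sum.cong) (auto simp: children_def subtree_size_def)
  finally show ?thesis .
qed

lemma status_parent:
  assumes "u \<in> V" "u \<noteq> root"
  shows "s (parent u) + n = s u + 2 * subtree_size u"
  using status_edge[OF edge_parent[OF assms]] by (simp add: subtree_size_def)

end

locale status_matching =
  T: status_injective_tree V E + T': status_injective_tree V' E'
  for V :: "'a set" and E :: "'a set set" and V' :: "'b set" and E' :: "'b set set" +
  assumes card_eq: "card V' = card V"
    and status_image_eq: "status V' E' ` V' = status V E ` V"
begin

definition match :: "'b \<Rightarrow> 'a" where
  "match a = inv_into V T.s (T'.s a)"

lemma
  assumes "a \<in> V'"
  shows match_in_V: "match a \<in> V"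
    and status_match: "T.s (match a) = T'.s a"
proof -
  have "T'.s a \<in> T.s ` V"
    using assms status_image_eq by blast
  then show "match a \<in> V" "T.s (match a) = T'.s a"
    unfolding match_def by (auto intro: inv_into_into f_inv_into_f)
qed

lemma match_eqI: "a \<in> V' \<Longrightarrow> v \<in> V \<Longrightarrow> T.s v = T'.s a \<Longrightarrow> match a = v"
  using status_match match_in_V T.status_inj by (metis inj_onD)

lemma bij_match: "bij_betw match V' V"
proof -
  have inj: "inj_on match V'"
    by (rule inj_onI) (metis status_match T'.status_inj inj_onD)
  moreover have "match ` V' = V"
  proof (rule card_subset_eq[OF T.finite_V])
    show "match ` V' \<subseteq> V"
      using match_in_V by blast
    show "card (match ` V') = card V"
      using card_image[OF inj] card_eq by simp
  qed
  ultimately show ?thesis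
    by (simp add: bij_betw_def)
qed

lemma match_inj: "a \<in> V' \<Longrightarrow> b \<in> V' \<Longrightarrow> match a = match b \<Longrightarrow> a = b"
  using bij_betw_imp_inj_on[OF bij_match] by (rule inj_onD)

lemma match_root: "match T'.root = T.root"
proof (rule match_eqI[OF T'.root_in_V T.root_in_V])
  obtain b where b: "b \<in> V'" "T'.s b = T.s T.root"
    using status_image_eq T.root_in_V by (metis imageE imageI)
  have "T.s T.root \<le> T'.s T'.root"
    using T.status_root_le[OF match_in_V] status_match T'.root_in_V by metis
  moreover have "T'.s T'.root \<le> T.s T.root"
    using T'.status_root_le b by metis
  ultimately show "T.s T.root = T'.s T'.root"
    by simp
qed

lemma match_eq_root_iff: "a \<in> V' \<Longrightarrow> match a = T.root \<longleftrightarrow> a = T'.root"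
  using match_inj match_root T'.root_in_V by metis

lemma match_children:
  assumes "a \<in> V'"
    and parents: "\<And>c. c \<in> V' \<Longrightarrow> c \<noteq> T'.root \<Longrightarrow> T'.s a < T'.s c \<Longrightarrow>
      match (T'.parent c) = T.parent (match c)"
  shows "match ` T'.children a = T.children (match a)"
proof (intro equalityI subsetI)
  fix v
  assume "v \<in> match ` T'.children a"
  then obtain c where c: "c \<in> V'" "c \<noteq> T'.root" "T'.parent c = a" "v = match c"
    by (auto simp: T'.children_def)
  then have "T.parent v = match a"
    using parents T'.status_parent_less by metis
  then show "v \<in> T.children (match a)"
    using c match_in_V match_eq_root_iff by (auto simp: T.children_def)
next
  fix v
  assume "v \<in> T.children (match a)"
  then have v: "v \<in> V" "v \<noteq> T.root" "T.parent v = match a"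
    by (auto simp: T.children_def)
  then obtain c where c: "c \<in> V'" "v = match c"
    using bij_match by (metis bij_betw_imp_surj_on imageE)
  then have "c \<noteq> T'.root"
    using v match_root by auto
  moreover have "T'.s a < T'.s c"
    using T.status_parent_less[OF v(1,2)] v(3) c status_match assms(1) by simp
  ultimately have "T'.parent c = a"
    using parents c v match_inj T'.parent_in_V assms(1) by metis
  then show "v \<in> match ` T'.children a"
    using c \<open>c \<noteq> T'.root\<close> by (auto simp: T'.children_def)
qed

lemma match_subtree_size:
  assumes "a \<in> V'" "a \<noteq> T'.root"
    and higher: "\<And>c. c \<in> V' \<Longrightarrow> c \<noteq> T'.root \<Longrightarrow> T'.s a < T'.s c \<Longrightarrow>
      match (T'.parent c) = T.parent (match c) \<and> T'.subtree_size c = T.subtree_size (match c)"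
  shows "T'.subtree_size a = T.subtree_size (match a)"
proof -
  have child: "c \<in> V'" "c \<noteq> T'.root" "T'.s a < T'.s c" if "c \<in> T'.children a" for c
    using that T'.status_parent_less by (auto simp: T'.children_def)
  have inj: "inj_on match (T'.children a)"
    using bij_betw_imp_inj_on[OF bij_match] by (rule inj_on_subset) (auto simp: T'.children_def)
  have "T.subtree_size (match a) = Suc (\<Sum>v \<in> T.children (match a). T.subtree_size v)"
    using T.subtree_size_rec match_in_V match_eq_root_iff assms(1,2) by simp
  also have "\<dots> = Suc (\<Sum>c \<in> T'.children a. T.subtree_size (match c))"
    using match_children[OF assms(1)] higher sum.reindex[OF inj] by (simp add: o_def)
  also have "\<dots> = Suc (\<Sum>c \<in> T'.children a. T'.subtree_size c)"
    using higher child by simp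
  also have "\<dots> = T'.subtree_size a"
    using T'.subtree_size_rec[OF assms(1,2)] by simp
  finally show ?thesis
    by simp
qed

lemma match_parent:
  assumes "a \<in> V'" "a \<noteq> T'.root" "T'.subtree_size a = T.subtree_size (match a)"
  shows "match (T'.parent a) = T.parent (match a)"
proof (rule match_eqI)
  have "match a \<in> V" "match a \<noteq> T.root"
    using assms match_in_V match_eq_root_iff by auto
  then show "T.parent (match a) \<in> V" "T.s (T.parent (match a)) = T'.s (T'.parent a)"
    using T.parent_in_V T.status_parent[of "match a"] T'.status_parent[OF assms(1,2)]
      status_match[OF assms(1)] assms(3) card_eq
    by simp_all
qed (use T'.parent_in_V assms in blast)

text \<open>Downward induction on the status: every child has larger status than its parent.\<close>

lemma match_parent_subtree_size:
  "a \<in> V' \<Longrightarrow> a \<noteq> T'.root \<Longrightarrow>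
    match (T'.parent a) = T.parent (match a) \<and> T'.subtree_size a = T.subtree_size (match a)"
proof (induction "Max (T'.s ` V') - T'.s a" arbitrary: a rule: less_induct)
  case less
  have "Max (T'.s ` V') - T'.s c < Max (T'.s ` V') - T'.s a"
    if "c \<in> V'" "T'.s a < T'.s c" for c
    using that Max_ge[OF finite_imageI[OF T'.finite_V], of "T'.s c"] by fastforce
  then have "T'.subtree_size a = T.subtree_size (match a)"
    using less match_subtree_size by blast
  then show ?case
    using match_parent less.prems by blast
qed

lemma match_edge_iff:
  assumes "a \<in> V'" "b \<in> V'"
  shows "{a, b} \<in> E' \<longleftrightarrow> {match a, match b} \<in> E"
proof -
  have parent_iff: "(x \<noteq> T'.root \<and> T'.parent x = y) \<longleftrightarrow>
      (match x \<noteq> T.root \<and> T.parent (match x) = match y)" if "x \<in> V'" "y \<in> V'" for x y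
    using that match_parent_subtree_size match_eq_root_iff match_inj T'.parent_in_V by metis
  show ?thesis
    using T'.edge_iff_parent[OF assms] T.edge_iff_parent[OF match_in_V match_in_V] assms
      parent_iff[OF assms] parent_iff[OF assms(2,1)] by blast
qed

lemma isomorphic: "graph_isomorphic V' E' V E"
  unfolding graph_isomorphic_def using bij_match match_edge_iff by blast

end

lemma status_seq_eqD:
  assumes "status_seq V' E' = status_seq V E" "finite V" "finite V'"
  shows "card V' = card V" "status V' E' ` V' = status V E ` V"
proof -
  have "image_mset (status V' E') (mset_set V') = image_mset (status V E) (mset_set V)"
    using arg_cong[OF assms(1), of mset] by (simp add: status_seq_def)
  from arg_cong[OF this, of size] arg_cong[OF this, of set_mset]
  show "card V' = card V" "status V' E' ` V' = status V E ` V"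
    using assms(2,3) by simp_all
qed

theorem theorem3p1:
  fixes V :: "'a set" and E :: "'a set set" and V' :: "'b set" and E' :: "'b set set"
  assumes "is_tree V E"
    and "status_injective V E"
    and "is_tree V' E'"
    and "status_seq V' E' = status_seq V E"
  shows "graph_isomorphic V' E' V E"
proof -
  interpret T: status_injective_tree V E
    using assms(1,2) by unfold_locales (auto simp: is_tree_def status_injective_def)
  interpret T': tree_graph V' E'
    using assms(3) by unfold_locales (auto simp: is_tree_def)
  have card: "card V' = card V" and image: "status V' E' ` V' = status V E ` V"
    using status_seq_eqD[OF assms(4) T.finite_V T'.finite_V] by auto
  have "inj_on (status V' E') V'"
    using T'.finite_V card image card_image[OF T.status_inj] by (metis eq_card_imp_inj_on)
  then interpret T': status_injective_tree V' E'
    by unfold_locales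
  interpret status_matching V E V' E'
    using card image by unfold_locales
  show ?thesis
    by (rule isomorphic)
qed

end
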